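(* The semigroups of tight and loose roles are both functorial with respect to positional reductions. That is, they define functors \[\mathrm{Role}_{\mathrm{tight}} \colon k\mathbf{FHGraph}_\mathsf{PR} \to \mathbf{SGrp}_\mathsf{Q}\] and \[\mathrm{Role}_{\mathrm{loose}} \colon k\mathbf{FHGraph}_\mathsf{PR} \to \mathbf{SGrp}_\mathsf{Q}.\]
   Context: An F-hypergraph is a pair of sets \((A,H)\) with \(H \subseteq A \times \mathcal{P}(A)\); a hyperedge is written \((a,U)\) with source vertex \(a\) and target set \(U \subseteq A\). A \(k\)-relational F-hypergraph is \(\mathcal{H} = (A,(H_i)_{i=1}^k)\) where each \((A,H_i)\) is an F-hypergraph. A map of \(k\)-relational F-hypergraphs \((A,(H_i)_{i=1}^k) \to (A',(H_i')_{i=1}^k)\) is a function \(f\colon A \to A'\) such that for every \(i\) and every \((a,V) \in H_i\) we have \((f(a), f(V)) \in H_i'\). Such a map reflects hyperedges if for every \(i\), every vertex \(a \in A\) and every hyperedge \((f(a),U) \in H_i'\), there exists \(V \subseteq A\) with \((a,V) \in H_i\) and \(f(V) = U\). A positional reduction is a map of \(k\)-relational F-hypergraphs which is surjective on vertices and reflects hyperedges; \(k\mathbf{FHGraph}_\mathsf{PR}\) denotes the category of \(k\)-relational F-hypergraphs and positional reductions. \(\mathbf{SGrp}_\mathsf{Q}\) denotes the category of semigroups and surjective semigroup homomorphisms. For F-hypergraphs \((A,H_1)\), \((A,H_2)\) on the same set, the tight composite is the F-hypergraph on \(A\) with hyperedge set \[\{(a,U) \mid \text{there exist } (a,V) \in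 H_1 \text{ and } b \in V \text{ such that } (b,U) \in H_2\},\] and the loose composite \(H_2 \diamond H_1\) has hyperedge set \[\Big\{(a,W) \;\Big|\; \text{there exists } (a,V) \in H_1 \text{ such that } W = \bigcup_{b \in V} \bigcup_{(b,U) \in H_2} U\Big\}.\] Both operations are associative on the set of F-hypergraph structures on \(A\). For \(\mathcal{H} = (A,(H_i)_{i=1}^k)\), the semigroup of tight roles \(\mathrm{Role}_{\mathrm{tight}}(\mathcal{H})\) is the semigroup generated by \(H_1,\ldots,H_k\) under tight composition, and the semigroup of loose roles \(\mathrm{Role}_{\mathrm{loose}}(\mathcal{H})\) is the semigroup generated by \(H_1,\ldots,H_k\) under loose composition. (In the paper these are written with a black-diamond subscript and a \(\diamond\) subscript, respectively.) *)

theory Defs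
  imports Main
begin

definition fhgraph :: "'a set \<Rightarrow> ('a \<times> 'a set) set \<Rightarrow> bool" where
  "fhgraph A H \<longleftrightarrow> H \<subseteq> A \<times> Pow A"

definition kfhgraph :: "nat \<Rightarrow> 'a set \<Rightarrow> (nat \<Rightarrow> ('a \<times> 'a set) set) \<Rightarrow> bool" where
  "kfhgraph k A Hs \<longleftrightarrow> (\<forall>i\<in>{1..k}. fhgraph A (Hs i))"

definition kfhg_map ::
  "nat \<Rightarrow> 'a set \<Rightarrow> (nat \<Rightarrow> ('a \<times> 'a set) set) \<Rightarrow> 'b set \<Rightarrow> (nat \<Rightarrow> ('b \<times> 'b set) set)
   \<Rightarrow> ('a \<Rightarrow> 'b) \<Rightarrow> bool" where
  "kfhg_map k A Hs A' Hs' f \<longleftrightarrow>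
     kfhgraph k A Hs \<and> kfhgraph k A' Hs' \<and> f ` A \<subseteq> A' \<and>
     (\<forall>i\<in>{1..k}. \<forall>a V. (a, V) \<in> Hs i \<longrightarrow> (f a, f ` V) \<in> Hs' i)"

definition reflects_hyperedges ::
  "nat \<Rightarrow> 'a set \<Rightarrow> (nat \<Rightarrow> ('a \<times> 'a set) set) \<Rightarrow> (nat \<Rightarrow> ('b \<times> 'b set) set)
   \<Rightarrow> ('a \<Rightarrow> 'b) \<Rightarrow> bool" where
  "reflects_hyperedges k A Hs Hs' f \<longleftrightarrow>
     (\<forall>i\<in>{1..k}. \<forall>a\<in>A. \<forall>U. (f a, U) \<in> Hs' i \<longrightarrow> (\<exists>V. (a, V) \<in> Hs i \<and> f ` V = U))"

definition positional_reduction ::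
  "nat \<Rightarrow> 'a set \<Rightarrow> (nat \<Rightarrow> ('a \<times> 'a set) set) \<Rightarrow> 'b set \<Rightarrow> (nat \<Rightarrow> ('b \<times> 'b set) set)
   \<Rightarrow> ('a \<Rightarrow> 'b) \<Rightarrow> bool" where
  "positional_reduction k A Hs A' Hs' f \<longleftrightarrow>
     kfhg_map k A Hs A' Hs' f \<and> f ` A = A' \<and> reflects_hyperedges k A Hs Hs' f"

text \<open>Tight composite: tight_comp H2 H1 (first H1, then H2).\<close>
definition tight_comp :: "('a \<times> 'a set) set \<Rightarrow> ('a \<times> 'a set) set \<Rightarrow> ('a \<times> 'a set) set" where
  "tight_comp H2 H1 = {(a, U). \<exists>V b. (a, V) \<in> H1 \<and> b \<in> V \<and> (b, U) \<in> H2}"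

definition loose_comp :: "('a \<times> 'a set) set \<Rightarrow> ('a \<times> 'a set) set \<Rightarrow> ('a \<times> 'a set) set" where
  "loose_comp H2 H1 = {(a, W). \<exists>V. (a, V) \<in> H1 \<and> W = (\<Union>b\<in>V. \<Union>{U. (b, U) \<in> H2})}"

text \<open>The semigroup generated by H_1..H_k under a composition operation (its carrier;
  the operation is the composition itself).\<close>
inductive_set roles ::
  "(('a \<times> 'a set) set \<Rightarrow> ('a \<times> 'a set) set \<Rightarrow> ('a \<times> 'a set) set)
   \<Rightarrow> nat \<Rightarrow> (nat \<Rightarrow> ('a \<times> 'a set) set) \<Rightarrow> ('a \<times> 'a set) set set"
  for comp k Hs where
  gen: "i \<in> {1..k} \<Longrightarrow> Hs i \<in> roles comp k Hs"
| cmp: "R \<in> roles comp k Hs \<Longrightarrow> S \<in> roles comp k Hs \<Longrightarrow> comp R S \<in> roles comp k Hs"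

abbreviation Role_tight where "Role_tight k Hs \<equiv> roles tight_comp k Hs"
abbreviation Role_loose where "Role_loose k Hs \<equiv> roles loose_comp k Hs"

definition push :: "('a \<Rightarrow> 'b) \<Rightarrow> ('a \<times> 'a set) set \<Rightarrow> ('b \<times> 'b set) set" where
  "push f R = (\<lambda>(a, U). (f a, f ` U)) ` R"

text \<open>phi is a morphism of SGrp_Q from the semigroup (S1, comp1) to (S2, comp2):
  a surjective semigroup homomorphism.\<close>
definition surj_sgrp_hom ::
  "'x set \<Rightarrow> ('x \<Rightarrow> 'x \<Rightarrow> 'x) \<Rightarrow> 'y set \<Rightarrow> ('y \<Rightarrow> 'y \<Rightarrow> 'y) \<Rightarrow> ('x \<Rightarrow> 'y) \<Rightarrow> bool" where
  "surj_sgrp_hom S1 m1 S2 m2 \<phi> \<longleftrightarrow>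
     \<phi> ` S1 = S2 \<and> (\<forall>x\<in>S1. \<forall>y\<in>S1. \<phi> (m1 x y) = m2 (\<phi> x) (\<phi> y))"

end

theory Submission
  imports Defs
begin

text \<open>Pushing a role forward along a positional reduction f commutes with both compositions
  as soon as the role R satisfies the same reflection property as the generators: every
  hyperedge of push f R at f a, with a in A, lifts to a hyperedge of R at a. For such R
  the targets of push f R at f b are exactly the images of the targets of R at b, and both
  composites are built out of these target sets. The property is inherited by composites,
  so induction over the generated semigroup makes push f a surjective homomorphism of role
  semigroups; functoriality of push itself is immediate.\<close>

definition push_reflecting :: "('a \<Rightarrow> 'b) \<Rightarrow> 'a set \<Rightarrow> ('a \<times> 'a set) set \<Rightarrow> bool" where
  "push_reflecting f A R \<longleftrightarrow> fhgraph A R \<and>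
     (\<forall>a\<in>A. \<forall>U. (f a, U) \<in> push f R \<longrightarrow> (\<exists>V. (a, V) \<in> R \<and> f ` V = U))"

lemma push_iff: "(x, W) \<in> push f R \<longleftrightarrow> (\<exists>a V. (a, V) \<in> R \<and> x = f a \<and> W = f ` V)"
  unfolding push_def by force

lemma push_memI: "(a, V) \<in> R \<Longrightarrow> (f a, f ` V) \<in> push f R"
  by (auto simp: push_iff)

lemma push_reflectingD:
  "push_reflecting f A R \<Longrightarrow> a \<in> A \<Longrightarrow> (f a, U) \<in> push f R \<Longrightarrow> \<exists>V. (a, V) \<in> R \<and> f ` V = U"
  unfolding push_reflecting_def by blast

lemma push_reflecting_fhgraph: "push_reflecting f A R \<Longrightarrow> fhgraph A R"
  unfolding push_reflecting_def by blast

lemma push_reflecting_targets: "push_reflecting f A R \<Longrightarrow> (a, V) \<in> R \<Longrightarrow> V \<subseteq> A"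
  unfolding push_reflecting_def fhgraph_def by blast

lemma targets_push:
  assumes "push_reflecting f A R" "b \<in> A"
  shows "{W. (f b, W) \<in> push f R} = image f ` {U. (b, U) \<in> R}"
proof
  show "{W. (f b, W) \<in> push f R} \<subseteq> image f ` {U. (b, U) \<in> R}"
    using push_reflectingD[OF assms] by blast
qed (auto intro: push_memI)

lemma image_loose_targets:
  assumes R: "push_reflecting f A R" and "V \<subseteq> A"
  shows "f ` (\<Union>b\<in>V. \<Union>{U. (b, U) \<in> R}) = (\<Union>b'\<in>f ` V. \<Union>{W. (b', W) \<in> push f R})"
proof -
  have "f ` (\<Union>b\<in>V. \<Union>{U. (b, U) \<in> R}) = (\<Union>b\<in>V. \<Union>(image f ` {U. (b, U) \<in> R}))"
    by blast
  also have "\<dots> = (\<Union>b\<in>V. \<Union>{W. (f b, W) \<in> push f R})"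
    using targets_push[OF R] \<open>V \<subseteq> A\<close> by (intro SUP_cong refl) (simp add: subset_iff)
  also have "\<dots> = (\<Union>b'\<in>f ` V. \<Union>{W. (b', W) \<in> push f R})"
    by (simp add: image_image)
  finally show ?thesis .
qed

lemma fhgraph_tight_comp: "fhgraph A R \<Longrightarrow> fhgraph A S \<Longrightarrow> fhgraph A (tight_comp R S)"
  unfolding fhgraph_def tight_comp_def by auto

lemma fhgraph_loose_comp: "fhgraph A R \<Longrightarrow> fhgraph A S \<Longrightarrow> fhgraph A (loose_comp R S)"
  unfolding fhgraph_def loose_comp_def by auto

lemma push_tight_comp:
  assumes R: "push_reflecting f A R" and S: "fhgraph A S"
  shows "push f (tight_comp R S) = tight_comp (push f R) (push f S)"
proof
  show "push f (tight_comp R S) \<subseteq> tight_comp (push f R) (push f S)"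
    unfolding tight_comp_def push_def by force
  show "tight_comp (push f R) (push f S) \<subseteq> push f (tight_comp R S)"
  proof (rule subsetI, clarify)
    fix x W assume "(x, W) \<in> tight_comp (push f R) (push f S)"
    then obtain V' b' where "(x, V') \<in> push f S" "b' \<in> V'" "(b', W) \<in> push f R"
      unfolding tight_comp_def by blast
    then obtain a V b where aV: "(a, V) \<in> S" "x = f a" "b \<in> V" and "(f b, W) \<in> push f R"
      by (force simp: push_iff)
    moreover have "b \<in> A"
      using S aV unfolding fhgraph_def by blast
    ultimately obtain U where "(b, U) \<in> R" "W = f ` U"
      using push_reflectingD[OF R] by metis
    with aV have "(a, U) \<in> tight_comp R S"
      unfolding tight_comp_def by blast
    then show "(x, W) \<in> push f (tight_comp R S)"
      using aV \<open>W = f ` U\<close> by (auto intro: push_memI)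
  qed
qed

lemma push_reflecting_tight_comp:
  assumes R: "push_reflecting f A R" and S: "push_reflecting f A S"
  shows "push_reflecting f A (tight_comp R S)"
  unfolding push_reflecting_def
proof (intro conjI ballI allI impI)
  show "fhgraph A (tight_comp R S)"
    using R S by (simp add: push_reflecting_fhgraph fhgraph_tight_comp)
  fix a W assume "a \<in> A" and "(f a, W) \<in> push f (tight_comp R S)"
  then have "(f a, W) \<in> tight_comp (push f R) (push f S)"
    using push_tight_comp[OF R push_reflecting_fhgraph[OF S]] by simp
  then obtain V' b' where "(f a, V') \<in> push f S" "b' \<in> V'" "(b', W) \<in> push f R"
    unfolding tight_comp_def by blast
  then obtain V b where "(a, V) \<in> S" "b \<in> V" "(f b, W) \<in> push f R"
    using push_reflectingD[OF S \<open>a \<in> A\<close>] by blast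
  moreover have "b \<in> A"
    using push_reflecting_targets[OF S \<open>(a, V) \<in> S\<close>] \<open>b \<in> V\<close> by blast
  ultimately obtain U where "(b, U) \<in> R" "f ` U = W"
    using push_reflectingD[OF R] by blast
  then show "\<exists>U. (a, U) \<in> tight_comp R S \<and> f ` U = W"
    using \<open>(a, V) \<in> S\<close> \<open>b \<in> V\<close> unfolding tight_comp_def by blast
qed

lemma loose_comp_eq_image:
  "loose_comp R S = (\<lambda>(a, V). (a, \<Union>b\<in>V. \<Union>{U. (b, U) \<in> R})) ` S"
  unfolding loose_comp_def by force

lemma push_loose_comp:
  assumes R: "push_reflecting f A R" and S: "fhgraph A S"
  shows "push f (loose_comp R S) = loose_comp (push f R) (push f S)"
proof -
  have "push f (loose_comp R S) = (\<lambda>(a, V). (f a, f ` (\<Union>b\<in>V. \<Union>{U. (b, U) \<in> R}))) ` S"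
    unfolding loose_comp_eq_image push_def image_image by (simp add: case_prod_beta')
  also have "\<dots> = (\<lambda>(a, V). (f a, \<Union>b'\<in>f ` V. \<Union>{W. (b', W) \<in> push f R})) ` S"
  proof (rule image_cong[OF refl], clarify, intro conjI refl)
    fix a V assume "(a, V) \<in> S"
    with S have "V \<subseteq> A"
      unfolding fhgraph_def by blast
    then show "f ` (\<Union>b\<in>V. \<Union>{U. (b, U) \<in> R}) = (\<Union>b'\<in>f ` V. \<Union>{W. (b', W) \<in> push f R})"
      by (rule image_loose_targets[OF R])
  qed
  also have "\<dots> = loose_comp (push f R) (push f S)"
    unfolding loose_comp_eq_image push_def image_image by (simp add: case_prod_beta')
  finally show ?thesis .
qed


lemma push_reflecting_loose_comp:
  assumes R: "push_reflecting f A R" and S: "push_reflecting f A S"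
  shows "push_reflecting f A (loose_comp R S)"
  unfolding push_reflecting_def
proof (intro conjI ballI allI impI)
  show "fhgraph A (loose_comp R S)"
    using R S by (simp add: push_reflecting_fhgraph fhgraph_loose_comp)
  fix a W assume "a \<in> A" and "(f a, W) \<in> push f (loose_comp R S)"
  then have "(f a, W) \<in> loose_comp (push f R) (push f S)"
    using push_loose_comp[OF R push_reflecting_fhgraph[OF S]] by simp
  then obtain V' where "(f a, V') \<in> push f S" and W: "W = (\<Union>b'\<in>V'. \<Union>{W. (b', W) \<in> push f R})"
    unfolding loose_comp_def by blast
  then obtain V where "(a, V) \<in> S" "f ` V = V'"
    using push_reflectingD[OF S \<open>a \<in> A\<close>] by blast
  moreover have "W = f ` (\<Union>b\<in>V. \<Union>{U. (b, U) \<in> R})"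
    using W image_loose_targets[OF R push_reflecting_targets[OF S \<open>(a, V) \<in> S\<close>]] \<open>f ` V = V'\<close>
    by simp
  ultimately show "\<exists>U. (a, U) \<in> loose_comp R S \<and> f ` U = W"
    unfolding loose_comp_def by blast
qed

lemma surj_sgrp_hom_roles:
  assumes gen_closed: "\<And>i. i \<in> {1..k} \<Longrightarrow> P (Hs i)"
    and gen_map: "\<And>i. i \<in> {1..k} \<Longrightarrow> \<phi> (Hs i) = Hs' i"
    and mult_closed: "\<And>R S. P R \<Longrightarrow> P S \<Longrightarrow> P (mult R S)"
    and mult_map: "\<And>R S. P R \<Longrightarrow> P S \<Longrightarrow> \<phi> (mult R S) = mult' (\<phi> R) (\<phi> S)"
  shows "surj_sgrp_hom (roles mult k Hs) mult (roles mult' k Hs') mult' \<phi>"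
proof -
  have closed: "R \<in> roles mult k Hs \<Longrightarrow> P R" for R
    by (induction rule: roles.induct) (auto intro: gen_closed mult_closed)
  have "\<phi> R \<in> roles mult' k Hs'" if "R \<in> roles mult k Hs" for R
    using that by (induction rule: roles.induct) (auto simp: gen_map mult_map closed intro: roles.intros)
  moreover have "R' \<in> \<phi> ` roles mult k Hs" if "R' \<in> roles mult' k Hs'" for R'
    using that
  proof (induction rule: roles.induct)
    case (gen i)
    then show ?case
      by (metis gen_map roles.gen imageI)
  next
    case (cmp R' S')
    then obtain R S where "R \<in> roles mult k Hs" "S \<in> roles mult k Hs" "R' = \<phi> R" "S' = \<phi> S"
      by blast
    then show ?case
      by (metis mult_map closed roles.cmp imageI)
  qed
  ultimately show ?thesis
    unfolding surj_sgrp_hom_def using mult_map closed by blast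
qed

lemma positional_reductionD:
  assumes "positional_reduction k A Hs A' Hs' f" "i \<in> {1..k}"
  shows "fhgraph A (Hs i)" "fhgraph A' (Hs' i)" "f ` A = A'"
    and "(a, V) \<in> Hs i \<Longrightarrow> (f a, f ` V) \<in> Hs' i"
    and "a \<in> A \<Longrightarrow> (f a, U) \<in> Hs' i \<Longrightarrow> \<exists>V. (a, V) \<in> Hs i \<and> f ` V = U"
  using assms
  unfolding positional_reduction_def kfhg_map_def kfhgraph_def reflects_hyperedges_def
  by simp_all

lemma push_generator:
  assumes "positional_reduction k A Hs A' Hs' f" "i \<in> {1..k}"
  shows "push f (Hs i) = Hs' i"
proof
  show "push f (Hs i) \<subseteq> Hs' i"
    using positional_reductionD(4)[OF assms] by (auto simp: push_def)
  show "Hs' i \<subseteq> push f (Hs i)"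
  proof (rule subsetI, clarify)
    fix x U assume "(x, U) \<in> Hs' i"
    then have "x \<in> f ` A"
      using positional_reductionD(2,3)[OF assms] unfolding fhgraph_def by blast
    then obtain a where "a \<in> A" "x = f a"
      by blast
    with positional_reductionD(5)[OF assms] \<open>(x, U) \<in> Hs' i\<close> obtain V where "(a, V) \<in> Hs i" "f ` V = U"
      by blast
    then show "(x, U) \<in> push f (Hs i)"
      using \<open>x = f a\<close> by (auto intro: push_memI)
  qed
qed

lemma push_reflecting_generator:
  assumes "positional_reduction k A Hs A' Hs' f" "i \<in> {1..k}"
  shows "push_reflecting f A (Hs i)"
  using positional_reductionD(1,5)[OF assms] push_generator[OF assms]
  unfolding push_reflecting_def by simp

lemma surj_sgrp_hom_push_roles:
  assumes pr: "positional_reduction k A Hs A' Hs' f"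
    and mult_closed: "\<And>R S. push_reflecting f A R \<Longrightarrow> push_reflecting f A S \<Longrightarrow>
      push_reflecting f A (mult R S)"
    and mult_map: "\<And>R S. push_reflecting f A R \<Longrightarrow> fhgraph A S \<Longrightarrow>
      push f (mult R S) = mult' (push f R) (push f S)"
  shows "surj_sgrp_hom (roles mult k Hs) mult (roles mult' k Hs') mult' (push f)"
  using push_reflecting_generator[OF pr] push_generator[OF pr] mult_closed
    mult_map[OF _ push_reflecting_fhgraph]
  by (rule surj_sgrp_hom_roles[where P = "push_reflecting f A"])

lemma push_comp: "push (g \<circ> f) R = push g (push f R)"
  unfolding push_def by (simp add: image_image case_prod_beta' image_comp)

lemma push_id: "push id R = R"
  unfolding push_def by auto

lemma kfhg_map_comp:
  "kfhg_map k A Hs A' Hs' f \<Longrightarrow> kfhg_map k A' Hs' A'' Hs'' g \<Longrightarrow> kfhg_map k A Hs A'' Hs'' (g \<circ> f)"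
  unfolding kfhg_map_def by (fastforce simp: image_comp)

lemma reflects_hyperedges_comp:
  assumes "reflects_hyperedges k A Hs Hs' f" "reflects_hyperedges k A' Hs' Hs'' g" "f ` A \<subseteq> A'"
  shows "reflects_hyperedges k A Hs Hs'' (g \<circ> f)"
  unfolding reflects_hyperedges_def
proof (intro ballI allI impI)
  fix i a U assume "i \<in> {1..k}" "a \<in> A" "((g \<circ> f) a, U) \<in> Hs'' i"
  then obtain V' where "(f a, V') \<in> Hs' i" "g ` V' = U"
    using assms(2,3) unfolding reflects_hyperedges_def by force
  moreover obtain V where "(a, V) \<in> Hs i" "f ` V = V'"
    using assms(1) \<open>i \<in> {1..k}\<close> \<open>a \<in> A\<close> calculation unfolding reflects_hyperedges_def by blast
  ultimately show "\<exists>V. (a, V) \<in> Hs i \<and> (g \<circ> f) ` V = U"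
    by (auto simp: image_comp)
qed

lemma positional_reduction_comp:
  "positional_reduction k A Hs A' Hs' f \<Longrightarrow> positional_reduction k A' Hs' A'' Hs'' g \<Longrightarrow>
    positional_reduction k A Hs A'' Hs'' (g \<circ> f)"
  unfolding positional_reduction_def
  by (auto simp: image_comp kfhg_map_comp reflects_hyperedges_comp)

lemma positional_reduction_id: "kfhgraph k A Hs \<Longrightarrow> positional_reduction k A Hs A Hs id"
  unfolding positional_reduction_def kfhg_map_def reflects_hyperedges_def by auto

theorem theorem6p11:
  fixes k :: nat
    and A :: "'a set" and Hs :: "nat \<Rightarrow> ('a \<times> 'a set) set"
    and A' :: "'b set" and Hs' :: "nat \<Rightarrow> ('b \<times> 'b set) set"
    and f :: "'a \<Rightarrow> 'b"
  assumes "positional_reduction k A Hs A' Hs' f"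
  shows "surj_sgrp_hom (Role_tight k Hs) tight_comp (Role_tight k Hs') tight_comp (push f)
       \<and> surj_sgrp_hom (Role_loose k Hs) loose_comp (Role_loose k Hs') loose_comp (push f)
       \<and> (\<forall>(A'' :: 'c set) Hs'' (g :: 'b \<Rightarrow> 'c). positional_reduction k A' Hs' A'' Hs'' g \<longrightarrow>
            positional_reduction k A Hs A'' Hs'' (g \<circ> f)
            \<and> (\<forall>R\<in>Role_tight k Hs. push (g \<circ> f) R = push g (push f R))
            \<and> (\<forall>R\<in>Role_loose k Hs. push (g \<circ> f) R = push g (push f R)))
       \<and> positional_reduction k A Hs A Hs id
       \<and> (\<forall>R\<in>Role_tight k Hs. push id R = R)
       \<and> (\<forall>R\<in>Role_loose k Hs. push id R = R)"
proof -
  have "surj_sgrp_hom (Role_tight k Hs) tight_comp (Role_tight k Hs') tight_comp (push f)"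
    by (rule surj_sgrp_hom_push_roles[where mult = tight_comp and mult' = tight_comp,
          OF assms push_reflecting_tight_comp push_tight_comp])
  moreover have "surj_sgrp_hom (Role_loose k Hs) loose_comp (Role_loose k Hs') loose_comp (push f)"
    by (rule surj_sgrp_hom_push_roles[where mult = loose_comp and mult' = loose_comp,
          OF assms push_reflecting_loose_comp push_loose_comp])
  moreover have "kfhgraph k A Hs"
    using assms unfolding positional_reduction_def kfhg_map_def by blast
  ultimately show ?thesis
    using positional_reduction_comp[OF assms] positional_reduction_id
    by (auto simp: push_comp push_id)
qed

end
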